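(* Let $N$ be a positive integer and $t>-\log N$. For integers $n\ge N$ let $$\theta_n(t,N)=\int_N^n\frac{dx}{t+\log x}-\sum_{k=N}^{n-1}\frac{1}{H_k-\gamma+t}.$$ (1) The sequence $(\theta_n(t,N))_{n>N}$ is positive, strictly increasing and bounded above; hence $\theta(t,N)=\lim_{n\to\infty}\theta_n(t,N)>0$ exists. (2) For all integers $n\ge N$ one has $\theta(t,N)-\theta_n(t,N)=\theta(t,n)$ and $$\int_{n+1}^\infty\frac{dx}{24x^2(t+\log x)^2}+\frac{1}{24(n+1)(t+\log(n+1))^2}\le\theta(t,n)$$ $$\le\int_n^\infty\frac{dx}{24x^2(t+\log x)^2}+\frac{1}{24(n+\frac12)(t+\log(n+\frac12))^2}+\frac{1}{24n^2(t+\log n)^2}+\frac{1}{12n^2(t+\log n)^3}.$$ (3) $\theta(t,N)=\theta_n(t,N)+\frac{1+o(1)}{12n(\log n)^2}$ as $n\to\infty$, and $\theta(t,N)=O\!\left(\frac{1}{Nt^2}\right)$ as $t\to\infty$, where the implied constant does not depend on $N$.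
   Context: $\gamma$ is the Euler–Mascheroni constant and $H_k=\sum_{j=1}^k1/j$ is the $k$-th harmonic number. *)

theory Defs
  imports "HOL-Analysis.Analysis" "HOL-Library.Landau_Symbols"
begin

definition theta_n :: "real \<Rightarrow> nat \<Rightarrow> nat \<Rightarrow> real" where
  "theta_n t N n =
     integral {real N..real n} (\<lambda>x. 1 / (t + ln x))
     - (\<Sum>k=N..<n. 1 / (harm k - euler_mascheroni + t))"

definition theta :: "real \<Rightarrow> nat \<Rightarrow> real" where
  "theta t N = lim (\<lambda>n. theta_n t N n)"

end

theory Submission
  imports Defs "HOL-Real_Asymp.Real_Asymp"
begin

text \<open>
  Write f(x) = 1/(t + ln x). The k-th summand of theta_n splits as
  [integral of f over [k, k+1] - f(k + 1/2)] + [f(k + 1/2) - 1/(H_k - gamma + t)].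
  The first bracket is a midpoint-rule error, squeezed between f''(k+1)/24 and
  (f''(k) + f''(k + 1/2))/48. For the second, H_k - gamma = ln(k + 1/2) + eps_k with
  1/(24 (k+1)^2) <= eps_k <= 1/(24 (k + 1/2)^2), obtained by telescoping the expansion
  ln((1+u)/(1-u)) = 2u + 2u^3/3 + ...; so the second bracket is eps_k/(L (L + eps_k)) with
  L = t + ln(k + 1/2), i.e. about 1/(24 x^2 (t + ln x)^2) at x = k + 1/2.
  Hence every summand is positive. Summing over k >= n, the second brackets are compared with
  the integral of 1/(24 x^2 (t + ln x)^2), and the f''/24 terms telescope through the
  antiderivative -f'/24 = 1/(24 x (t + ln x)^2); this gives the bounds of part (2),
  from which part (3) is routine.
\<close>

lemma deriv_le_imp_le:
  fixes h p h' p' :: "real \<Rightarrow> real"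
  assumes "a \<le> b" "continuous_on {a..b} h" "continuous_on {a..b} p"
    and "\<And>x. a < x \<Longrightarrow> x < b \<Longrightarrow> (h has_real_derivative h' x) (at x)"
    and "\<And>x. a < x \<Longrightarrow> x < b \<Longrightarrow> (p has_real_derivative p' x) (at x)"
    and "\<And>x. a < x \<Longrightarrow> x < b \<Longrightarrow> h' x \<le> p' x"
    and "h a \<le> p a"
  shows "h b \<le> p b"
proof -
  have "(\<lambda>x. p x - h x) a \<le> (\<lambda>x. p x - h x) b"
  proof (rule DERIV_nonneg_imp_increasing_open[OF assms(1)])
    fix x assume "a < x" "x < b"
    then show "\<exists>y. ((\<lambda>x. p x - h x) has_real_derivative y) (at x) \<and> 0 \<le> y"
      using assms(4-6) by (intro exI[of _ "p' x - h' x"]) (auto intro!: derivative_intros)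
  qed (intro continuous_on_diff assms(2,3))
  then show ?thesis using assms(7) by simp
qed

lemma diff_le_of_deriv_le:
  fixes f f' :: "real \<Rightarrow> real"
  assumes "a \<le> b" "\<And>x. a \<le> x \<Longrightarrow> x \<le> b \<Longrightarrow> (f has_real_derivative f' x) (at x)"
    and "\<And>x. a \<le> x \<Longrightarrow> x \<le> b \<Longrightarrow> f' x \<le> B"
  shows "f b - f a \<le> (b - a) * B"
proof (cases "a = b")
  case False
  then obtain z where "a < z" "z < b" "f b - f a = (b - a) * f' z"
    using MVT2[of a b f f'] assms(1,2) by force
  then show ?thesis using assms(1) assms(3)[of z] by (simp add: mult_left_mono)
qed simp

lemma diff_ge_of_deriv_ge:
  fixes f f' :: "real \<Rightarrow> real"
  assumes "a \<le> b" "\<And>x. a \<le> x \<Longrightarrow> x \<le> b \<Longrightarrow> (f has_real_derivative f' x) (at x)"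
    and "\<And>x. a \<le> x \<Longrightarrow> x \<le> b \<Longrightarrow> B \<le> f' x"
  shows "(b - a) * B \<le> f b - f a"
proof (cases "a = b")
  case False
  then obtain z where "a < z" "z < b" "f b - f a = (b - a) * f' z"
    using MVT2[of a b f f'] assms(1,2) by force
  then show ?thesis using assms(1) assms(3)[of z] by (simp add: mult_left_mono)
qed simp

lemma midpoint_rule_lower:
  fixes f f' :: "real \<Rightarrow> real"
  assumes a: "0 \<le> a"
    and f': "\<And>x. m - a \<le> x \<Longrightarrow> x \<le> m + a \<Longrightarrow> (f has_real_derivative f' x) (at x)"
    and osc: "\<And>u. 0 \<le> u \<Longrightarrow> u \<le> a \<Longrightarrow> c * u \<le> f' (m + u) - f' (m - u)"
  shows "c * a^3 / 6 \<le> integral {m - a..m + a} f - 2 * a * f m"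
proof -
  have cont: "continuous_on {m - a..m + a} f"
    using f' by (meson DERIV_isCont atLeastAtMost_iff continuous_at_imp_continuous_on)
  define F where "F x = integral {m - a..x} f" for x
  have F_cont: "continuous_on {m - a..m + a} F"
    unfolding F_def by (intro indefinite_integral_continuous_1 integrable_continuous_real cont)
  have F': "(F has_real_derivative f x) (at x)" if "m - a < x" "x < m + a" for x
  proof -
    have "(F has_real_derivative f x) (at x within {m - a..m + a})"
      unfolding F_def using that by (intro integral_has_real_derivative cont) auto
    moreover have "at x within {m - a..m + a} = at x"
      using that by (intro at_within_interior) auto
    ultimately show ?thesis by simp
  qed
  have even_part: "c * v^2 / 2 \<le> f (m + v) + f (m - v) - 2 * f m" if v: "0 \<le> v" "v \<le> a" for v
  proof (rule deriv_le_imp_le[OF v(1), where h' = "\<lambda>u. c * u" and p' = "\<lambda>u. f' (m + u) - f' (m - u)"])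
    show "continuous_on {0..v} (\<lambda>u. f (m + u) + f (m - u) - 2 * f m)"
      using v by (intro continuous_intros continuous_on_compose2[OF cont]) auto
    fix u assume u: "0 < u" "u < v"
    show "((\<lambda>u. f (m + u) + f (m - u) - 2 * f m) has_real_derivative f' (m + u) - f' (m - u)) (at u)"
      using u v by (auto intro!: derivative_eq_intros DERIV_chain2[OF f'])
    show "c * u \<le> f' (m + u) - f' (m - u)" using osc u v by simp
  qed (auto intro!: derivative_eq_intros continuous_intros)
  have "c * a^3 / 6 \<le> F (m + a) - F (m - a) - 2 * a * f m"
  proof (rule deriv_le_imp_le[OF a, where h' = "\<lambda>u. c * u^2 / 2" and p' = "\<lambda>u. f (m + u) + f (m - u) - 2 * f m"])
    show "continuous_on {0..a} (\<lambda>u. F (m + u) - F (m - u) - 2 * u * f m)"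
      by (intro continuous_intros continuous_on_compose2[OF F_cont]) auto
    fix u assume u: "0 < u" "u < a"
    show "((\<lambda>u. F (m + u) - F (m - u) - 2 * u * f m) has_real_derivative f (m + u) + f (m - u) - 2 * f m) (at u)"
      using u by (auto intro!: derivative_eq_intros DERIV_chain2[OF F'])
    show "c * u^2 / 2 \<le> f (m + u) + f (m - u) - 2 * f m" using even_part u by simp
  qed (auto intro!: derivative_eq_intros continuous_intros)
  then show ?thesis by (simp add: F_def)
qed

lemma midpoint_rule_upper:
  fixes f f' :: "real \<Rightarrow> real"
  assumes a: "0 \<le> a"
    and f': "\<And>x. m - a \<le> x \<Longrightarrow> x \<le> m + a \<Longrightarrow> (f has_real_derivative f' x) (at x)"
    and osc: "\<And>u. 0 \<le> u \<Longrightarrow> u \<le> a \<Longrightarrow> f' (m + u) - f' (m - u) \<le> c * u"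
  shows "integral {m - a..m + a} f - 2 * a * f m \<le> c * a^3 / 6"
proof -
  have "(- c) * a^3 / 6 \<le> integral {m - a..m + a} (\<lambda>x. - f x) - 2 * a * (- f m)"
  proof (rule midpoint_rule_lower[OF a, where f' = "\<lambda>x. - f' x"])
    show "((\<lambda>x. - f x) has_real_derivative - f' x) (at x)" if "m - a \<le> x" "x \<le> m + a" for x
      using f'[OF that] by (rule DERIV_minus)
    show "(- c) * u \<le> - f' (m + u) - - f' (m - u)" if "0 \<le> u" "u \<le> a" for u
      using osc[OF that] by simp
  qed
  then show ?thesis by simp
qed

lemma has_integral_antimono_bounds:
  fixes g :: "real \<Rightarrow> real"
  assumes "(g has_integral I) {a..b}" "a \<le> b"
    and "\<And>x y. a \<le> x \<Longrightarrow> x \<le> y \<Longrightarrow> y \<le> b \<Longrightarrow> g y \<le> g x"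
  shows "(b - a) * g b \<le> I" "I \<le> (b - a) * g a"
proof -
  have lo: "((\<lambda>x. g b) has_integral (b - a) * g b) {a..b}" and hi: "((\<lambda>x. g a) has_integral (b - a) * g a) {a..b}"
    using has_integral_const_real[of "g b" a b] has_integral_const_real[of "g a" a b] assms(2)
    by (simp_all add: mult.commute)
  show "(b - a) * g b \<le> I"
    by (rule has_integral_le[OF lo assms(1)]) (simp add: assms(3))
  show "I \<le> (b - a) * g a"
    by (rule has_integral_le[OF assms(1) hi]) (simp add: assms(3))
qed

lemma nonneg_bounded_integrable_on_Ici:
  fixes h :: "real \<Rightarrow> real"
  assumes int: "\<And>y. h integrable_on {a..y}" and nonneg: "\<And>x. a \<le> x \<Longrightarrow> 0 \<le> h x"
    and bound: "\<And>y. integral {a..y} h \<le> B"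
  shows "h integrable_on {a..}" "((\<lambda>y. integral {a..y} h) \<longlongrightarrow> integral {a..} h) at_top"
proof -
  have mono: "mono (\<lambda>y. integral {a..y} h)"
    by (simp add: int integral_subset_le monoI nonneg)
  then have "incseq (\<lambda>n. integral {a..real n} h)"
    unfolding incseq_def by (auto intro: monoD)
  then obtain L where "(\<lambda>n. integral {a..real n} h) \<longlonglongrightarrow> L"
    using incseq_convergent[of _ B] bound by blast
  then have lim: "((\<lambda>y. integral {a..y} h) \<longlongrightarrow> L) at_top"
    by (rule tendsto_at_topI_sequentially_real[OF mono])
  then have "(h has_integral L) {a..}" using int nonneg by (intro has_integral_to_inf)
  then show "h integrable_on {a..}" "((\<lambda>y. integral {a..y} h) \<longlongrightarrow> integral {a..} h) at_top"
    using lim by (auto simp: integrable_on_def integral_unique)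
qed


lemma inverse_powers_antimono:
  fixes a b c d :: real
  assumes "0 < a" "a \<le> b" "0 < c" "c \<le> d"
  shows "1 / (b^n * d^m) \<le> 1 / (a^n * c^m)"
  using assms by (intro divide_left_mono mult_mono power_mono mult_pos_pos) auto

lemma inverse_powers_le_inverse_mult_square:
  fixes x s L :: real
  assumes "1 \<le> x" "1 \<le> s" "s \<le> L" "1 \<le> n" "2 \<le> m"
  shows "1 / (x^n * L^m) \<le> 1 / (x * s^2)"
proof (rule divide_left_mono)
  have "x^1 \<le> x^n" using assms by (intro power_increasing) auto
  moreover have "s^2 \<le> L^2" using assms by (intro power_mono) auto
  then have "s^2 \<le> L^m" using assms by (auto intro: order_trans power_increasing)
  ultimately show "x * s^2 \<le> x^n * L^m" using assms by (intro mult_mono) auto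
  show "0 < x^n * L^m * (x * s^2)" using assms by simp
qed simp

lemma inverse_square_diff:
  fixes a b :: real
  assumes "a \<noteq> 0" "b \<noteq> 0"
  shows "1 / (24 * a^2) - 1 / (24 * b^2) = (b^2 - a^2) / (24 * (a * b)^2)"
  using assms by (simp add: field_simps power2_eq_square)

lemma ln_ratio_has_derivative:
  fixes w :: real
  assumes "0 \<le> w" "w < 1"
  shows "((\<lambda>w. ln (1 + w) - ln (1 - w) - 2 * w) has_real_derivative 2 * w^2 / (1 - w^2)) (at w)"
proof -
  have "w * w < 1" using mult_left_le_one_le[of w w] assms by linarith
  then have "1 - w^2 \<noteq> 0" "1 - w \<noteq> 0" "1 + w \<noteq> 0" using assms by (auto simp: power2_eq_square)
  then show ?thesis using assms
    by (auto intro!: derivative_eq_intros simp: field_simps power2_eq_square)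
qed

lemma ln_ratio_continuous_on:
  fixes u :: real
  assumes "u < 1"
  shows "continuous_on {0..u} (\<lambda>w. ln (1 + w) - ln (1 - w) - 2 * w)"
  using assms by (intro continuous_intros) auto

lemma ln_ratio_lower:
  fixes u :: real
  assumes u: "0 \<le> u" "u < 1"
  shows "2 * u^3 / 3 \<le> ln (1 + u) - ln (1 - u) - 2 * u"
proof (rule deriv_le_imp_le[OF u(1), where h' = "\<lambda>w. 2 * w^2" and p' = "\<lambda>w. 2 * w^2 / (1 - w^2)"])
  fix w :: real assume w: "0 < w" "w < u"
  then show "((\<lambda>w. ln (1 + w) - ln (1 - w) - 2 * w) has_real_derivative 2 * w^2 / (1 - w^2)) (at w)"
    using u by (intro ln_ratio_has_derivative) auto
  have "w^2 < 1" using w u by (simp add: power_less_one_iff abs_less_iff)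
  then show "2 * w^2 \<le> 2 * w^2 / (1 - w^2)"
    using w by (simp add: le_divide_eq mult_le_cancel_left1)
qed (use u in \<open>auto intro!: derivative_eq_intros continuous_intros ln_ratio_continuous_on\<close>)

lemma ln_ratio_upper:
  fixes u :: real
  assumes u: "0 \<le> u" "u < 1"
  shows "ln (1 + u) - ln (1 - u) - 2 * u \<le> 2 * u^3 / (3 * (1 - u^2))"
proof -
  have "u * u < 1" using mult_left_le_one_le[of u u] u by linarith
  then have u2: "u^2 < 1" by (simp add: power2_eq_square)
  define C where "C = 2 / (3 * (1 - u^2))"
  have "ln (1 + u) - ln (1 - u) - 2 * u \<le> C * u^3"
  proof (rule deriv_le_imp_le[OF u(1), where h' = "\<lambda>w. 2 * w^2 / (1 - w^2)" and p' = "\<lambda>w. C * (3 * w^2)"])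
    fix w :: real assume w: "0 < w" "w < u"
    then show "((\<lambda>w. ln (1 + w) - ln (1 - w) - 2 * w) has_real_derivative 2 * w^2 / (1 - w^2)) (at w)"
      using u by (intro ln_ratio_has_derivative) auto
    have "w^2 \<le> u^2" using w by (intro power_mono) auto
    then have "2 * w^2 / (1 - w^2) \<le> 2 * w^2 / (1 - u^2)"
      using u2 by (intro divide_left_mono) auto
    also have "\<dots> = C * (3 * w^2)" using u2 by (simp add: C_def field_simps)
    finally show "2 * w^2 / (1 - w^2) \<le> C * (3 * w^2)" .
  qed (use u in \<open>auto intro!: derivative_eq_intros continuous_intros ln_ratio_continuous_on\<close>)
  then show ?thesis by (simp add: C_def)
qed

lemma ln_ratio_bound_le_inverse_square_diff:
  fixes y :: real
  assumes y: "1 \<le> y"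
  shows "2 * (1 / (2 * y))^3 / (3 * (1 - (1 / (2 * y))^2))
    \<le> 1 / (24 * (y - 1/2)^2) - 1 / (24 * (y + 1/2)^2)"
proof -
  define P where "P = 4 * y^2 - 1"
  have "1 \<le> y * y" using mult_mono[of 1 y 1 y] y by simp
  then have P: "0 < P" by (simp add: P_def power2_eq_square)
  have "2 * (1 / (2 * y))^3 / (3 * (1 - (1 / (2 * y))^2)) = 1 / (3 * y * P)"
  proof -
    have "1 - (1 / (2 * y))^2 = P / (4 * y^2)" using y by (simp add: P_def field_simps power2_eq_square)
    then show ?thesis using y P by (simp add: power2_eq_square power3_eq_cube divide_simps)
  qed
  also have "\<dots> = P / (3 * y * P^2)"
    using y P by (simp add: power2_eq_square)
  also have "\<dots> \<le> (4 * y^2) / (3 * y * P^2)"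
    using y P by (intro divide_right_mono) (auto simp: P_def)
  also have "\<dots> = 2 * y / (24 * (P / 4)^2)"
    using y P by (simp add: field_simps power2_eq_square)
  also have "\<dots> = 1 / (24 * (y - 1/2)^2) - 1 / (24 * (y + 1/2)^2)"
  proof -
    have "y - 1/2 \<noteq> 0" "y + 1/2 \<noteq> 0" using y by auto
    note diff = inverse_square_diff[OF this]
    have "(y + 1/2)^2 - (y - 1/2)^2 = 2 * y" "(y - 1/2) * (y + 1/2) = P / 4"
      by (simp_all add: P_def power2_eq_square algebra_simps)
    then show ?thesis unfolding diff by (simp only:)
  qed
  finally show ?thesis .
qed

lemma inverse_square_diff_le_ln_ratio_bound:
  fixes y :: real
  assumes y: "1 \<le> y"
  shows "1 / (24 * y^2) - 1 / (24 * (y + 1)^2) \<le> 2 * (1 / (2 * y))^3 / 3"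
proof -
  have "(y + 1)^2 - y^2 = 2 * y + 1" by (simp add: power2_eq_square algebra_simps)
  then have "1 / (24 * y^2) - 1 / (24 * (y + 1)^2) = (2 * y + 1) / (24 * y^2 * (y + 1)^2)"
    using y by (simp add: inverse_square_diff power_mult_distrib)
  also have "\<dots> \<le> 1 / (12 * y^3)"
  proof -
    have "(2 * y + 1) * (12 * y^3) \<le> 24 * y^2 * (y + 1)^2 * 1"
      using y by (simp add: power2_eq_square power3_eq_cube algebra_simps)
    then show ?thesis using y by (simp add: divide_simps)
  qed
  also have "\<dots> = 2 * (1 / (2 * y))^3 / 3" using y by (simp add: field_simps power3_eq_cube)
  finally show ?thesis .
qed


section \<open>The harmonic remainder\<close>

definition harm_remainder :: "nat \<Rightarrow> real" where
  "harm_remainder k = harm k - euler_mascheroni - ln (real k + 1/2)"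

lemma harm_remainder_LIMSEQ: "harm_remainder \<longlonglongrightarrow> 0"
proof -
  have "(\<lambda>n. harm n - ln (real n) - euler_mascheroni) \<longlonglongrightarrow> 0"
    using euler_mascheroni_LIMSEQ by (simp add: LIM_zero)
  moreover have "(\<lambda>n. ln (real n + 1/2) - ln (real n)) \<longlonglongrightarrow> 0"
    by real_asymp
  ultimately have "(\<lambda>n. (harm n - ln (real n) - euler_mascheroni) - (ln (real n + 1/2) - ln (real n))) \<longlonglongrightarrow> 0 - 0"
    by (intro tendsto_diff)
  then show ?thesis unfolding harm_remainder_def by (simp add: algebra_simps)
qed

lemma harm_remainder_diff:
  fixes k :: nat
  defines "u \<equiv> 1 / (2 * (real k + 1))"
  shows "harm_remainder k - harm_remainder (Suc k) = ln (1 + u) - ln (1 - u) - 2 * u"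
proof -
  have "1 + u = (real k + 3/2) / (real k + 1)" "1 - u = (real k + 1/2) / (real k + 1)"
    "2 * u = inverse (real (Suc k))"
    by (simp_all add: u_def field_simps)
  moreover have "real (Suc k) + 1/2 = real k + 3/2" by simp
  ultimately show ?thesis unfolding harm_remainder_def harm_Suc by (simp add: ln_div)
qed

lemma harm_remainder_upper: "harm_remainder k \<le> 1 / (24 * (real k + 1/2)^2)"
proof -
  define c where "c k = harm_remainder k - 1 / (24 * (real k + 1/2)^2)" for k
  have "incseq c"
  proof (rule incseq_SucI)
    fix k
    define y where "y = real k + 1"
    have "harm_remainder k - harm_remainder (Suc k) \<le> 2 * (1 / (2 * y))^3 / (3 * (1 - (1 / (2 * y))^2))"
      unfolding harm_remainder_diff y_def[symmetric] by (rule ln_ratio_upper) (auto simp: y_def)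
    also have "\<dots> \<le> 1 / (24 * (y - 1/2)^2) - 1 / (24 * (y + 1/2)^2)"
      by (rule ln_ratio_bound_le_inverse_square_diff) (simp add: y_def)
    finally show "c k \<le> c (Suc k)" by (simp add: c_def y_def algebra_simps)
  qed
  moreover have "c \<longlonglongrightarrow> 0 - 0"
    unfolding c_def by (intro tendsto_diff harm_remainder_LIMSEQ) real_asymp
  ultimately have "c k \<le> 0" using incseq_le by fastforce
  then show ?thesis by (simp add: c_def)
qed

lemma harm_remainder_lower: "1 / (24 * (real k + 1)^2) \<le> harm_remainder k"
proof -
  define c where "c k = harm_remainder k - 1 / (24 * (real k + 1)^2)" for k
  have "decseq c"
  proof (rule decseq_SucI)
    fix k
    define y where "y = real k + 1"
    have "1 / (24 * y^2) - 1 / (24 * (y + 1)^2) \<le> 2 * (1 / (2 * y))^3 / 3"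
      by (rule inverse_square_diff_le_ln_ratio_bound) (simp add: y_def)
    also have "\<dots> \<le> harm_remainder k - harm_remainder (Suc k)"
      unfolding harm_remainder_diff y_def[symmetric] by (rule ln_ratio_lower) (auto simp: y_def)
    finally show "c (Suc k) \<le> c k" by (simp add: c_def y_def algebra_simps)
  qed
  moreover have "c \<longlonglongrightarrow> 0 - 0"
    unfolding c_def by (intro tendsto_diff harm_remainder_LIMSEQ) real_asymp
  ultimately have "0 \<le> c k" using decseq_ge by fastforce
  then show ?thesis by (simp add: c_def)
qed

lemma harm_remainder_pos: "0 < harm_remainder k"
  using harm_remainder_lower[of k] by (smt (verit) divide_pos_pos of_nat_0_le_iff zero_less_power)

lemma harm_sub_euler_le_ln: "harm k - euler_mascheroni \<le> ln (real k + 1)"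
proof -
  have "ln ((real k + 1/2) / (real k + 1)) \<le> (real k + 1/2) / (real k + 1) - 1"
    by (rule ln_le_minus_one) simp
  moreover have "ln ((real k + 1/2) / (real k + 1)) = ln (real k + 1/2) - ln (real k + 1)"
    using ln_div[of "real k + 1/2" "real k + 1"] by simp
  moreover have "(real k + 1/2) / (real k + 1) - 1 = - 1 / (2 * real k + 2)"
    by (simp add: field_simps)
  ultimately have "ln (real k + 1/2) + 1 / (2 * real k + 2) \<le> ln (real k + 1)"
    by simp
  moreover have "1 / (24 * (real k + 1/2)^2) \<le> 1 / (2 * real k + 2)"
  proof -
    have "2 * real k + 2 \<le> 24 * (real k + 1/2)^2" by (simp add: power2_eq_square algebra_simps)
    moreover have "0 < 24 * (real k + 1/2)^2 * (2 * real k + 2)" by simp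
    ultimately show ?thesis by (intro divide_left_mono) auto
  qed
  ultimately show ?thesis using harm_remainder_upper[of k] unfolding harm_remainder_def by linarith
qed


section \<open>The function 1/(t + ln x) and its derivatives\<close>

definition admissible :: "real \<Rightarrow> real \<Rightarrow> bool" where
  "admissible t x \<longleftrightarrow> 0 < x \<and> 0 < t + ln x"

definition recip_log :: "real \<Rightarrow> real \<Rightarrow> real" where
  "recip_log t x = 1 / (t + ln x)"

definition recip_log' :: "real \<Rightarrow> real \<Rightarrow> real" where
  "recip_log' t x = - 1 / (x * (t + ln x)^2)"

definition recip_log'' :: "real \<Rightarrow> real \<Rightarrow> real" where
  "recip_log'' t x = 1 / (x^2 * (t + ln x)^2) + 2 / (x^2 * (t + ln x)^3)"

definition theta_dens :: "real \<Rightarrow> real \<Rightarrow> real" where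
  "theta_dens t x = 1 / (24 * x^2 * (t + ln x)^2)"

definition theta_dens' :: "real \<Rightarrow> real \<Rightarrow> real" where
  "theta_dens' t x = - (1 / (12 * x^3 * (t + ln x)^2) + 1 / (12 * x^3 * (t + ln x)^3))"

definition tail_term :: "real \<Rightarrow> real \<Rightarrow> real" where
  "tail_term t x = 1 / (24 * x * (t + ln x)^2)"

lemma admissible_mono:
  assumes "admissible t x" "x \<le> y"
  shows "admissible t y"
proof -
  have x: "0 < x" "0 < t + ln x" using assms(1) by (auto simp: admissible_def)
  then have "ln x \<le> ln y" using assms(2) by simp
  then show ?thesis using x assms(2) unfolding admissible_def by linarith
qed

lemma admissible_of_nat_mono:
  "admissible t (real n) \<Longrightarrow> n \<le> m \<Longrightarrow> admissible t (real m)"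
  by (erule admissible_mono) simp

lemma has_real_derivative_recip_log:
  assumes "admissible t x"
  shows "(recip_log t has_real_derivative recip_log' t x) (at x)"
proof -
  define l where "l = t + ln x"
  have l: "ln x = l - t" "0 < l" "l \<noteq> 0" using assms by (auto simp: l_def admissible_def)
  show ?thesis using assms l(2) unfolding admissible_def recip_log_def recip_log'_def
    by (auto intro!: derivative_eq_intros simp: l power2_eq_square field_simps)
qed

lemma has_real_derivative_recip_log':
  assumes "admissible t x"
  shows "(recip_log' t has_real_derivative recip_log'' t x) (at x)"
proof -
  define l where "l = t + ln x"
  have l: "ln x = l - t" "0 < l" "l \<noteq> 0" using assms by (auto simp: l_def admissible_def)
  show ?thesis using assms l(2) unfolding admissible_def recip_log'_def recip_log''_def
    by (auto intro!: derivative_eq_intros simp: l power2_eq_square power3_eq_cube field_simps)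
qed

lemma has_real_derivative_theta_dens:
  assumes "admissible t x"
  shows "(theta_dens t has_real_derivative theta_dens' t x) (at x)"
proof -
  define l where "l = t + ln x"
  have l: "ln x = l - t" "0 < l" "l \<noteq> 0" using assms by (auto simp: l_def admissible_def)
  show ?thesis using assms l(2) unfolding admissible_def theta_dens_def theta_dens'_def
    by (auto intro!: derivative_eq_intros simp: l power2_eq_square power3_eq_cube field_simps)
qed

lemma has_real_derivative_tail_term:
  assumes "admissible t x"
  shows "(tail_term t has_real_derivative - recip_log'' t x / 24) (at x)"
proof -
  define l where "l = t + ln x"
  have l: "ln x = l - t" "0 < l" "l \<noteq> 0" using assms by (auto simp: l_def admissible_def)
  show ?thesis using assms l(2) unfolding admissible_def tail_term_def recip_log''_def
    by (auto intro!: derivative_eq_intros simp: l power2_eq_square power3_eq_cube field_simps)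
qed

lemma inverse_powers_log_antimono:
  assumes "admissible t x" "x \<le> y"
  shows "1 / (y^n * (t + ln y)^m) \<le> 1 / (x^n * (t + ln x)^m)"
proof -
  have "0 < x" "0 < t + ln x" using assms(1) by (auto simp: admissible_def)
  moreover from this have "t + ln x \<le> t + ln y" using assms(2) by simp
  ultimately show ?thesis using assms(2) by (intro inverse_powers_antimono) auto
qed

lemma recip_log''_antimono:
  assumes "admissible t x" "x \<le> y"
  shows "recip_log'' t y \<le> recip_log'' t x"
  using inverse_powers_log_antimono[OF assms, of 2 2] inverse_powers_log_antimono[OF assms, of 2 3]
  unfolding recip_log''_def by (intro add_mono) (auto simp: divide_right_mono)

lemma theta_dens_antimono:
  assumes "admissible t x" "x \<le> y"
  shows "theta_dens t y \<le> theta_dens t x"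
  using inverse_powers_log_antimono[OF assms, of 2 2] unfolding theta_dens_def
  by (simp add: divide_right_mono flip: divide_divide_eq_left mult.assoc)

lemma tail_term_antimono:
  assumes "admissible t x" "x \<le> y"
  shows "tail_term t y \<le> tail_term t x"
  using inverse_powers_log_antimono[OF assms, of 1 2] unfolding tail_term_def
  by (simp add: divide_right_mono flip: divide_divide_eq_left mult.assoc)

lemma theta_dens'_mono:
  assumes "admissible t x" "x \<le> y"
  shows "theta_dens' t x \<le> theta_dens' t y"
  using inverse_powers_log_antimono[OF assms, of 3 2] inverse_powers_log_antimono[OF assms, of 3 3]
  unfolding theta_dens'_def
  by (simp add: divide_right_mono add_mono flip: divide_divide_eq_left mult.assoc)

lemma theta_dens_pos: "admissible t x \<Longrightarrow> 0 < theta_dens t x"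
  by (simp add: admissible_def theta_dens_def)

lemma tail_term_pos: "admissible t x \<Longrightarrow> 0 < tail_term t x"
  by (simp add: admissible_def tail_term_def)

lemma recip_log''_pos: "admissible t x \<Longrightarrow> 0 < recip_log'' t x"
  by (auto simp: admissible_def recip_log''_def intro!: add_pos_pos)

lemma recip_log''_div_24:
  "recip_log'' t x / 24 = 1 / (24 * x^2 * (t + ln x)^2) + 1 / (12 * x^2 * (t + ln x)^3)"
  unfolding recip_log''_def by (simp add: field_simps)

lemma recip_log''_div_24_eq:
  assumes "admissible t x"
  shows "recip_log'' t x / 24 = (1 + 2 / (t + ln x)) * theta_dens t x"
proof -
  obtain L where L: "t + ln x = L" "0 < L" "0 < x" using assms by (auto simp: admissible_def)
  show ?thesis unfolding recip_log''_div_24 theta_dens_def L(1)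
    using L(2,3) by (simp add: field_simps power2_eq_square power3_eq_cube)
qed

lemma theta_dens_le_recip_log'':
  assumes "admissible t x"
  shows "theta_dens t x \<le> recip_log'' t x / 24"
proof -
  have "0 < t + ln x" using assms by (simp add: admissible_def)
  then show ?thesis
    using recip_log''_div_24_eq[OF assms] theta_dens_pos[OF assms] by (simp add: algebra_simps)
qed

lemma recip_log''_le_theta_dens:
  assumes "admissible t a" "a \<le> x"
  shows "recip_log'' t x / 24 \<le> (1 + 2 / (t + ln a)) * theta_dens t x"
proof -
  have x: "admissible t x" using admissible_mono[OF assms] .
  have "0 < t + ln a" "t + ln a \<le> t + ln x" using assms by (auto simp: admissible_def)
  then have "2 / (t + ln x) \<le> 2 / (t + ln a)" by (intro divide_left_mono) auto
  then show ?thesis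
    unfolding recip_log''_div_24_eq[OF x] using theta_dens_pos[OF x] by (intro mult_right_mono) auto
qed

lemma continuous_on_recip_log:
  assumes "admissible t a"
  shows "continuous_on {a..b} (recip_log t)"
proof (intro continuous_at_imp_continuous_on ballI)
  fix x assume "x \<in> {a..b}"
  then have "admissible t x" using admissible_mono[OF assms] by simp
  then show "isCont (recip_log t) x" by (rule DERIV_isCont[OF has_real_derivative_recip_log])
qed

lemma continuous_on_theta_dens:
  assumes "admissible t a"
  shows "continuous_on {a..b} (theta_dens t)"
proof (intro continuous_at_imp_continuous_on ballI)
  fix x assume "x \<in> {a..b}"
  then have "admissible t x" using admissible_mono[OF assms] by simp
  then show "isCont (theta_dens t) x" by (rule DERIV_isCont[OF has_real_derivative_theta_dens])
qed

lemma tail_term_tendsto_0: "((\<lambda>x. tail_term t x) \<longlongrightarrow> 0) at_top"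
  unfolding tail_term_def by real_asymp


section \<open>Midpoint errors and the harmonic gap\<close>

lemma recip_log_midpoint_lower:
  assumes k: "admissible t k"
  shows "recip_log'' t (k + 1) / 24 \<le> integral {k..k + 1} (recip_log t) - recip_log t (k + 1/2)"
proof -
  have "2 * recip_log'' t (k + 1) * (1/2)^3 / 6
      \<le> integral {k + 1/2 - 1/2..k + 1/2 + 1/2} (recip_log t) - 2 * (1/2) * recip_log t (k + 1/2)"
  proof (rule midpoint_rule_lower[where f' = "recip_log' t"])
    fix x assume "k + 1/2 - 1/2 \<le> x" "x \<le> k + 1/2 + 1/2"
    then have "admissible t x" by (intro admissible_mono[OF k]) auto
    then show "(recip_log t has_real_derivative recip_log' t x) (at x)"
      by (rule has_real_derivative_recip_log)
  next
    fix u :: real assume u: "0 \<le> u" "u \<le> 1/2"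
    have "(k + 1/2 + u - (k + 1/2 - u)) * recip_log'' t (k + 1)
        \<le> recip_log' t (k + 1/2 + u) - recip_log' t (k + 1/2 - u)"
    proof (rule diff_ge_of_deriv_ge)
      fix x assume x: "k + 1/2 - u \<le> x" "x \<le> k + 1/2 + u"
      then have adm: "admissible t x" using u by (intro admissible_mono[OF k]) auto
      then show "(recip_log' t has_real_derivative recip_log'' t x) (at x)"
        by (rule has_real_derivative_recip_log')
      show "recip_log'' t (k + 1) \<le> recip_log'' t x"
        using adm x u by (intro recip_log''_antimono) auto
    qed (use u in auto)
    then show "2 * recip_log'' t (k + 1) * u \<le> recip_log' t (k + 1/2 + u) - recip_log' t (k + 1/2 - u)"
      by (simp add: algebra_simps)
  qed simp
  then show ?thesis by (simp add: power3_eq_cube add_ac)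
qed

lemma recip_log_midpoint_upper:
  assumes k: "admissible t k"
  shows "integral {k..k + 1} (recip_log t) - recip_log t (k + 1/2)
    \<le> (recip_log'' t k + recip_log'' t (k + 1/2)) / 48"
proof -
  define m where "m = k + 1/2"
  have m: "admissible t m" using k by (intro admissible_mono[OF k]) (simp add: m_def)
  have "integral {m - 1/2..m + 1/2} (recip_log t) - 2 * (1/2) * recip_log t m
      \<le> (recip_log'' t k + recip_log'' t m) * (1/2)^3 / 6"
  proof (rule midpoint_rule_upper[where f' = "recip_log' t"])
    fix x assume "m - 1/2 \<le> x" "x \<le> m + 1/2"
    then have "admissible t x" by (intro admissible_mono[OF k]) (auto simp: m_def)
    then show "(recip_log t has_real_derivative recip_log' t x) (at x)"
      by (rule has_real_derivative_recip_log)
  next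
    fix u :: real assume u: "0 \<le> u" "u \<le> 1/2"
    have right: "recip_log' t (m + u) - recip_log' t m \<le> (m + u - m) * recip_log'' t m"
    proof (rule diff_le_of_deriv_le)
      fix x assume x: "m \<le> x" "x \<le> m + u"
      then have adm: "admissible t x" by (intro admissible_mono[OF m])
      then show "(recip_log' t has_real_derivative recip_log'' t x) (at x)"
        by (rule has_real_derivative_recip_log')
      show "recip_log'' t x \<le> recip_log'' t m" using m x(1) by (rule recip_log''_antimono)
    qed (use u in auto)
    have left: "recip_log' t m - recip_log' t (m - u) \<le> (m - (m - u)) * recip_log'' t k"
    proof (rule diff_le_of_deriv_le)
      fix x assume x: "m - u \<le> x" "x \<le> m"
      then have "k \<le> x" using u by (simp add: m_def)
      then have adm: "admissible t x" by (intro admissible_mono[OF k])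
      then show "(recip_log' t has_real_derivative recip_log'' t x) (at x)"
        by (rule has_real_derivative_recip_log')
      show "recip_log'' t x \<le> recip_log'' t k" using k \<open>k \<le> x\<close> by (rule recip_log''_antimono)
    qed (use u in auto)
    show "recip_log' t (m + u) - recip_log' t (m - u) \<le> (recip_log'' t k + recip_log'' t m) * u"
      using left right by (simp add: algebra_simps)
  qed simp
  then show ?thesis by (simp add: m_def power3_eq_cube add_ac)
qed

lemma theta_dens_midpoint_le:
  assumes k: "admissible t k"
  shows "theta_dens t (k + 1/2) \<le> integral {k..k + 1} (theta_dens t)"
proof -
  have "0 * (1/2)^3 / 6
      \<le> integral {k + 1/2 - 1/2..k + 1/2 + 1/2} (theta_dens t) - 2 * (1/2) * theta_dens t (k + 1/2)"
  proof (rule midpoint_rule_lower[where f' = "theta_dens' t"])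
    fix x assume "k + 1/2 - 1/2 \<le> x" "x \<le> k + 1/2 + 1/2"
    then have "admissible t x" by (intro admissible_mono[OF k]) auto
    then show "(theta_dens t has_real_derivative theta_dens' t x) (at x)"
      by (rule has_real_derivative_theta_dens)
  next
    fix u :: real assume u: "0 \<le> u" "u \<le> 1/2"
    have "admissible t (k + 1/2 - u)" using u by (intro admissible_mono[OF k]) auto
    then have "theta_dens' t (k + 1/2 - u) \<le> theta_dens' t (k + 1/2 + u)"
      using u by (intro theta_dens'_mono) auto
    then show "0 * u \<le> theta_dens' t (k + 1/2 + u) - theta_dens' t (k + 1/2 - u)" by simp
  qed simp
  then show ?thesis by (simp add: add_ac)
qed

lemma recip_harm_gap_eq:
  assumes "admissible t (real k)"
  shows "0 < harm k - euler_mascheroni + t"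
    "recip_log t (real k + 1/2) - 1 / (harm k - euler_mascheroni + t)
      = harm_remainder k / ((t + ln (real k + 1/2)) * (t + ln (real k + 1/2) + harm_remainder k))"
proof -
  define L where "L = t + ln (real k + 1/2)"
  have L: "0 < L" using admissible_mono[OF assms, of "real k + 1/2"] by (simp add: admissible_def L_def)
  have H: "harm k - euler_mascheroni + t = L + harm_remainder k"
    by (simp add: L_def harm_remainder_def)
  show "0 < harm k - euler_mascheroni + t" unfolding H using L harm_remainder_pos[of k] by simp
  show "recip_log t (real k + 1/2) - 1 / (harm k - euler_mascheroni + t)
      = harm_remainder k / ((t + ln (real k + 1/2)) * (t + ln (real k + 1/2) + harm_remainder k))"
    unfolding H recip_log_def L_def[symmetric] using L harm_remainder_pos[of k] by (simp add: field_simps)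
qed

lemma recip_harm_gap_le:
  assumes "admissible t (real k)"
  shows "recip_log t (real k + 1/2) - 1 / (harm k - euler_mascheroni + t) \<le> theta_dens t (real k + 1/2)"
proof -
  define L where "L = t + ln (real k + 1/2)"
  define e where "e = harm_remainder k"
  have L: "0 < L" using admissible_mono[OF assms, of "real k + 1/2"] by (simp add: admissible_def L_def)
  have e: "0 < e" "e \<le> 1 / (24 * (real k + 1/2)^2)"
    using harm_remainder_pos harm_remainder_upper by (auto simp: e_def)
  have "recip_log t (real k + 1/2) - 1 / (harm k - euler_mascheroni + t) = e / (L * (L + e))"
    using recip_harm_gap_eq(2)[OF assms] by (simp add: L_def e_def)
  also have "\<dots> \<le> e / (L * L)" using L e by (intro divide_left_mono mult_left_mono) auto
  also have "\<dots> \<le> (1 / (24 * (real k + 1/2)^2)) / (L * L)" using L e by (intro divide_right_mono) auto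
  also have "\<dots> = theta_dens t (real k + 1/2)" by (simp add: theta_dens_def L_def power2_eq_square)
  finally show ?thesis .
qed

lemma recip_harm_gap_ge:
  assumes "admissible t (real k)"
  shows "theta_dens t (real k + 1) \<le> recip_log t (real k + 1/2) - 1 / (harm k - euler_mascheroni + t)"
proof -
  define L where "L = t + ln (real k + 1/2)"
  define L' where "L' = t + ln (real k + 1)"
  define e where "e = harm_remainder k"
  have L: "0 < L" using admissible_mono[OF assms, of "real k + 1/2"] by (simp add: admissible_def L_def)
  have e: "0 < e" "1 / (24 * (real k + 1)^2) \<le> e"
    using harm_remainder_pos harm_remainder_lower by (auto simp: e_def)
  have L': "L + e \<le> L'"
    using harm_sub_euler_le_ln[of k] by (simp add: L_def L'_def e_def harm_remainder_def)
  have "theta_dens t (real k + 1) = (1 / (24 * (real k + 1)^2)) / (L' * L')"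
    by (simp add: theta_dens_def L'_def power2_eq_square)
  also have "\<dots> \<le> e / (L' * L')" using e L L' by (intro divide_right_mono) auto
  also have "\<dots> \<le> e / (L * (L + e))" using e L L' by (intro divide_left_mono mult_mono) auto
  also have "\<dots> = recip_log t (real k + 1/2) - 1 / (harm k - euler_mascheroni + t)"
    using recip_harm_gap_eq(2)[OF assms] by (simp add: L_def e_def)
  finally show ?thesis .
qed


section \<open>Integrals of the density\<close>

lemma has_integral_recip_log'':
  assumes "admissible t a" "a \<le> b"
  shows "((\<lambda>x. recip_log'' t x / 24) has_integral tail_term t a - tail_term t b) {a..b}"
proof -
  have "((\<lambda>x. - recip_log'' t x / 24) has_integral tail_term t b - tail_term t a) {a..b}"
  proof (rule fundamental_theorem_of_calculus[OF assms(2)])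
    fix x assume "x \<in> {a..b}"
    then have "admissible t x" using admissible_mono[OF assms(1)] by simp
    then show "(tail_term t has_vector_derivative - recip_log'' t x / 24) (at x within {a..b})"
      using has_real_derivative_tail_term
      by (simp add: has_real_derivative_iff_has_vector_derivative[symmetric] has_field_derivative_at_within)
  qed
  from has_integral_neg[OF this] show ?thesis by simp
qed

lemma theta_dens_integral_unit_le:
  assumes "admissible t x"
  shows "integral {x..x + 1} (theta_dens t) \<le> theta_dens t x"
proof -
  have "(theta_dens t has_integral integral {x..x + 1} (theta_dens t)) {x..x + 1}"
    using assms by (intro integrable_integral integrable_continuous_real continuous_on_theta_dens)
  moreover have "theta_dens t v \<le> theta_dens t u" if "x \<le> u" "u \<le> v" "v \<le> x + 1" for u v
    using theta_dens_antimono[OF admissible_mono[OF assms that(1)] that(2)] .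
  ultimately show ?thesis using has_integral_antimono_bounds(2)[of _ _ x "x + 1"] by simp
qed

lemma tail_term_step_le:
  assumes "admissible t x"
  shows "tail_term t x - tail_term t (x + 1) \<le> recip_log'' t x / 24"
proof -
  have int: "((\<lambda>x. recip_log'' t x / 24) has_integral tail_term t x - tail_term t (x + 1)) {x..x + 1}"
    by (rule has_integral_recip_log''[OF assms]) simp
  have "recip_log'' t v / 24 \<le> recip_log'' t u / 24" if "x \<le> u" "u \<le> v" "v \<le> x + 1" for u v
    using recip_log''_antimono[OF admissible_mono[OF assms that(1)] that(2)] by simp
  from has_integral_antimono_bounds(2)[OF int _ this] show ?thesis by simp
qed

lemma recip_log''_half_le_tail_term_diff:
  assumes "admissible t (x - 1/2)"
  shows "(recip_log'' t x + recip_log'' t (x + 1/2)) / 48 \<le> tail_term t (x - 1/2) - tail_term t (x + 1/2)"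
proof -
  have x: "admissible t x" using admissible_mono[OF assms] by simp
  have left: "((\<lambda>x. recip_log'' t x / 24) has_integral tail_term t (x - 1/2) - tail_term t x) {x - 1/2..x}"
    by (rule has_integral_recip_log''[OF assms]) simp
  have right: "((\<lambda>x. recip_log'' t x / 24) has_integral tail_term t x - tail_term t (x + 1/2)) {x..x + 1/2}"
    by (rule has_integral_recip_log''[OF x]) simp
  have anti: "recip_log'' t v \<le> recip_log'' t u" if "x - 1/2 \<le> u" "u \<le> v" for u v
    using recip_log''_antimono[OF admissible_mono[OF assms that(1)] that(2)] .
  have "(x - (x - 1/2)) * (recip_log'' t x / 24) \<le> tail_term t (x - 1/2) - tail_term t x"
    by (rule has_integral_antimono_bounds(1)[OF left]) (simp_all add: anti)
  moreover have "(x + 1/2 - x) * (recip_log'' t (x + 1/2) / 24) \<le> tail_term t x - tail_term t (x + 1/2)"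
    by (rule has_integral_antimono_bounds(1)[OF right]) (simp_all add: anti)
  ultimately show ?thesis by simp
qed

lemma theta_dens_integral_le_tail_term:
  assumes "admissible t a" "a \<le> b"
  shows "integral {a..b} (theta_dens t) \<le> tail_term t a - tail_term t b"
proof (rule has_integral_le[OF _ has_integral_recip_log''[OF assms]])
  show "(theta_dens t has_integral integral {a..b} (theta_dens t)) {a..b}"
    using assms by (intro integrable_integral integrable_continuous_real continuous_on_theta_dens)
  show "theta_dens t x \<le> recip_log'' t x / 24" if "x \<in> {a..b}" for x
    using that admissible_mono[OF assms(1)] by (intro theta_dens_le_recip_log'') simp
qed

lemma tail_term_diff_le_theta_dens_integral:
  assumes "admissible t a" "a \<le> b"
  shows "tail_term t a - tail_term t b \<le> (1 + 2 / (t + ln a)) * integral {a..b} (theta_dens t)"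
proof (rule has_integral_le[OF has_integral_recip_log''[OF assms] has_integral_mult_right])
  show "(theta_dens t has_integral integral {a..b} (theta_dens t)) {a..b}"
    using assms by (intro integrable_integral integrable_continuous_real continuous_on_theta_dens)
  show "recip_log'' t x / 24 \<le> (1 + 2 / (t + ln a)) * theta_dens t x" if "x \<in> {a..b}" for x
    using that assms(1) by (intro recip_log''_le_theta_dens) auto
qed

lemma theta_dens_integrable_on_Ici:
  assumes a: "admissible t a"
  shows "theta_dens t integrable_on {a..}"
    "((\<lambda>y. integral {a..y} (theta_dens t)) \<longlongrightarrow> integral {a..} (theta_dens t)) at_top"
proof -
  have "integral {a..y} (theta_dens t) \<le> tail_term t a" for y
  proof (cases "a \<le> y")
    case True
    then show ?thesis
      using theta_dens_integral_le_tail_term[OF a True] tail_term_pos[OF admissible_mono[OF a True]] by simp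
  qed (use tail_term_pos[OF a] in simp)
  moreover have "theta_dens t integrable_on {a..y}" for y
    by (intro integrable_continuous_real continuous_on_theta_dens[OF a])
  moreover have "0 \<le> theta_dens t x" if "a \<le> x" for x
    using theta_dens_pos[OF admissible_mono[OF a that]] by simp
  ultimately show "theta_dens t integrable_on {a..}"
    "((\<lambda>y. integral {a..y} (theta_dens t)) \<longlongrightarrow> integral {a..} (theta_dens t)) at_top"
    using nonneg_bounded_integrable_on_Ici by blast+
qed

lemma theta_dens_integral_Ici_le_tail_term:
  assumes "admissible t a"
  shows "integral {a..} (theta_dens t) \<le> tail_term t a"
proof -
  have "integral {a..} (theta_dens t) \<le> tail_term t a - 0"
  proof (rule tendsto_le[OF trivial_limit_at_top_linorder _ theta_dens_integrable_on_Ici(2)[OF assms]])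
    show "((\<lambda>y. tail_term t a - tail_term t y) \<longlongrightarrow> tail_term t a - 0) at_top"
      by (intro tendsto_intros tail_term_tendsto_0)
    show "\<forall>\<^sub>F y in at_top. integral {a..y} (theta_dens t) \<le> tail_term t a - tail_term t y"
      using eventually_ge_at_top[of a] by eventually_elim (rule theta_dens_integral_le_tail_term[OF assms])
  qed
  then show ?thesis by simp
qed

lemma tail_term_le_theta_dens_integral_Ici:
  assumes "admissible t a"
  shows "tail_term t a \<le> (1 + 2 / (t + ln a)) * integral {a..} (theta_dens t)"
proof -
  have "tail_term t a - 0 \<le> (1 + 2 / (t + ln a)) * integral {a..} (theta_dens t)"
  proof (rule tendsto_le[OF trivial_limit_at_top_linorder tendsto_mult_left[OF theta_dens_integrable_on_Ici(2)[OF assms]]])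
    show "((\<lambda>y. tail_term t a - tail_term t y) \<longlongrightarrow> tail_term t a - 0) at_top"
      by (intro tendsto_intros tail_term_tendsto_0)
    show "\<forall>\<^sub>F y in at_top. tail_term t a - tail_term t y \<le> (1 + 2 / (t + ln a)) * integral {a..y} (theta_dens t)"
      using eventually_ge_at_top[of a] by eventually_elim (rule tail_term_diff_le_theta_dens_integral[OF assms])
  qed
  then show ?thesis by simp
qed

lemma theta_dens_integral_le_Ici:
  assumes "admissible t a" "a \<le> b"
  shows "integral {a..b} (theta_dens t) \<le> integral {a..} (theta_dens t)"
proof (rule integral_subset_le)
  show "theta_dens t integrable_on {a..b}"
    by (intro integrable_continuous_real continuous_on_theta_dens[OF assms(1)])
  show "\<forall>x \<in> {a..}. 0 \<le> theta_dens t x"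
    using theta_dens_pos[OF admissible_mono[OF assms(1)]] by (simp add: less_imp_le)
qed (use theta_dens_integrable_on_Ici[OF assms(1)] assms(2) in auto)

lemma theta_dens_integral_Ici_nonneg:
  assumes "admissible t a"
  shows "0 \<le> integral {a..} (theta_dens t)"
proof (rule integral_nonneg[OF theta_dens_integrable_on_Ici(1)[OF assms]])
  show "0 \<le> theta_dens t x" if "x \<in> {a..}" for x
    using that theta_dens_pos[OF admissible_mono[OF assms]] by (simp add: less_imp_le)
qed


section \<open>The partial sums and their limit\<close>

definition theta_step :: "real \<Rightarrow> nat \<Rightarrow> real" where
  "theta_step t k = integral {real k..real k + 1} (recip_log t) - 1 / (harm k - euler_mascheroni + t)"

lemma theta_step_split:
  "theta_step t k = (integral {real k..real k + 1} (recip_log t) - recip_log t (real k + 1/2))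
    + (recip_log t (real k + 1/2) - 1 / (harm k - euler_mascheroni + t))"
  by (simp add: theta_step_def)

lemma theta_step_lower:
  assumes "admissible t (real k)"
  shows "theta_dens t (real k + 1) + recip_log'' t (real k + 1) / 24 \<le> theta_step t k"
  using recip_log_midpoint_lower[OF assms] recip_harm_gap_ge[OF assms]
  unfolding theta_step_split by linarith

lemma theta_step_upper:
  assumes "admissible t (real k)"
  shows "theta_step t k \<le> integral {real k..real k + 1} (theta_dens t)
    + (recip_log'' t (real k) + recip_log'' t (real k + 1/2)) / 48"
  using recip_log_midpoint_upper[OF assms] recip_harm_gap_le[OF assms] theta_dens_midpoint_le[OF assms]
  unfolding theta_step_split by linarith

lemma theta_step_pos:
  assumes "admissible t (real k)"
  shows "0 < theta_step t k"
proof -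
  have "admissible t (real k + 1)" using admissible_mono[OF assms] by simp
  then show ?thesis
    using theta_step_lower[OF assms] theta_dens_pos recip_log''_pos by fastforce
qed

text \<open>For m < n both sides vanish: the interval {real n..real m} is empty.\<close>

lemma theta_n_eq_sum:
  assumes n: "admissible t (real n)"
  shows "theta_n t n m = (\<Sum>k=n..<m. theta_step t k)"
proof (cases "n \<le> m")
  case True
  then show ?thesis
  proof (induction m rule: dec_induct)
    case base
    show ?case by (simp add: theta_n_def)
  next
    case (step m)
    have "integral {real n..real m} (recip_log t) + integral {real m..real m + 1} (recip_log t)
        = integral {real n..real m + 1} (recip_log t)"
      using step.hyps
      by (intro Henstock_Kurzweil_Integration.integral_combine integrable_continuous_real
          continuous_on_recip_log[OF n]) auto
    then show ?case using step.IH step.hyps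
      by (simp add: theta_n_def theta_step_def recip_log_def[abs_def] algebra_simps)
  qed
qed (simp add: theta_n_def)

lemma theta_n_pos:
  assumes "admissible t (real n)" "n < m"
  shows "0 < theta_n t n m"
  unfolding theta_n_eq_sum[OF assms(1)]
proof (rule sum_pos)
  show "0 < theta_step t k" if "k \<in> {n..<m}" for k
    using that by (intro theta_step_pos admissible_of_nat_mono[OF assms(1)]) simp
qed (use assms(2) in auto)

lemma theta_n_split:
  assumes "admissible t (real n)" "n \<le> p" "p \<le> m"
  shows "theta_n t n m = theta_n t n p + theta_n t p m"
  using assms admissible_of_nat_mono[OF assms(1,2)]
  by (simp add: theta_n_eq_sum sum.atLeastLessThan_concat)

lemma theta_n_strict_mono:
  assumes "admissible t (real N)" "N \<le> m" "m < n"
  shows "theta_n t N m < theta_n t N n"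
  using theta_n_split[OF assms(1,2), of n] theta_n_pos[OF admissible_of_nat_mono[OF assms(1,2)] assms(3)] assms(3)
  by linarith

lemma theta_n_lower:
  assumes n: "admissible t (real n)" and "n \<le> m"
  shows "integral {real n + 1..real m + 1} (theta_dens t) + tail_term t (real n + 1) - tail_term t (real m + 1)
    \<le> theta_n t n m"
  using \<open>n \<le> m\<close>
proof (induction m rule: dec_induct)
  case base
  show ?case by (simp add: theta_n_def)
next
  case (step m)
  have m: "admissible t (real m)" using admissible_of_nat_mono[OF n step.hyps(1)] .
  then have m1: "admissible t (real m + 1)" by (rule admissible_mono) simp
  have "integral {real n + 1..real m + 1} (theta_dens t) + integral {real m + 1..real m + 1 + 1} (theta_dens t)
      = integral {real n + 1..real m + 1 + 1} (theta_dens t)"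
    using step.hyps admissible_mono[OF n, of "real n + 1"]
    by (intro Henstock_Kurzweil_Integration.integral_combine integrable_continuous_real continuous_on_theta_dens) auto
  moreover have "theta_n t n (Suc m) = theta_n t n m + theta_step t m"
    using step.hyps by (simp add: theta_n_eq_sum[OF n])
  ultimately show ?case
    using step.IH theta_step_lower[OF m] theta_dens_integral_unit_le[OF m1] tail_term_step_le[OF m1]
    by (simp add: algebra_simps)
qed

lemma theta_n_upper:
  assumes n: "admissible t (real n)" and "Suc n \<le> m"
  shows "theta_n t n m \<le> integral {real n..real m} (theta_dens t) + recip_log'' t (real n) / 24
    + tail_term t (real n + 1/2) - tail_term t (real m - 1/2)"
  using \<open>Suc n \<le> m\<close>
proof (induction m rule: dec_induct)
  case base
  have "recip_log'' t (real n + 1/2) \<le> recip_log'' t (real n)"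
    using recip_log''_antimono[OF n] by simp
  have "theta_n t n (Suc n) = theta_step t n" by (simp add: theta_n_eq_sum[OF n])
  also have "\<dots> \<le> integral {real n..real n + 1} (theta_dens t)
      + (recip_log'' t (real n) + recip_log'' t (real n + 1/2)) / 48"
    by (rule theta_step_upper[OF n])
  also have "\<dots> \<le> integral {real n..real n + 1} (theta_dens t) + recip_log'' t (real n) / 24"
    using \<open>recip_log'' t (real n + 1/2) \<le> recip_log'' t (real n)\<close> by simp
  finally show ?case by (simp add: add_ac)
next
  case (step m)
  have m: "admissible t (real m)" using admissible_of_nat_mono[OF n] step.hyps by simp
  have "admissible t (real m - 1/2)" using step.hyps by (intro admissible_mono[OF n]) auto
  note half = recip_log''_half_le_tail_term_diff[OF this]
  have "integral {real n..real m} (theta_dens t) + integral {real m..real m + 1} (theta_dens t)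
      = integral {real n..real m + 1} (theta_dens t)"
    using step.hyps
    by (intro Henstock_Kurzweil_Integration.integral_combine integrable_continuous_real
        continuous_on_theta_dens[OF n]) auto
  moreover have "theta_n t n (Suc m) = theta_n t n m + theta_step t m"
    using step.hyps by (simp add: theta_n_eq_sum[OF n])
  ultimately show ?case
    using step.IH theta_step_upper[OF m] half by (simp add: algebra_simps)
qed

lemma theta_n_le_bound:
  assumes n: "admissible t (real n)"
  shows "theta_n t n m \<le> integral {real n..} (theta_dens t) + tail_term t (real n + 1/2) + recip_log'' t (real n) / 24"
proof (cases "Suc n \<le> m")
  case True
  have "admissible t (real m - 1/2)" using True by (intro admissible_mono[OF n]) auto
  then show ?thesis
    using theta_n_upper[OF n True] theta_dens_integral_le_Ici[OF n, of "real m"] tail_term_pos True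
    by fastforce
next
  case False
  then have "theta_n t n m = 0" by (simp add: theta_n_eq_sum[OF n])
  moreover have "admissible t (real n + 1/2)" by (rule admissible_mono[OF n]) simp
  ultimately show ?thesis
    using theta_dens_integral_Ici_nonneg[OF n] tail_term_pos[of t "real n + 1/2"] recip_log''_pos[OF n] by simp
qed

lemma theta_n_LIMSEQ:
  assumes n: "admissible t (real n)"
  shows "theta_n t n \<longlonglongrightarrow> theta t n"
proof -
  have "incseq (theta_n t n)"
    unfolding incseq_def theta_n_eq_sum[OF n]
  proof (intro allI impI sum_mono2)
    show "0 \<le> theta_step t k" if "k \<in> {n..<m'} - {n..<m}" for k m m'
      using that by (intro less_imp_le[OF theta_step_pos] admissible_of_nat_mono[OF n]) simp
  qed auto
  then obtain L where "theta_n t n \<longlonglongrightarrow> L"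
    using incseq_convergent theta_n_le_bound[OF n] by blast
  then show ?thesis by (simp add: theta_def limI)
qed

lemma theta_le:
  assumes n: "admissible t (real n)"
  shows "theta t n \<le> integral {real n..} (theta_dens t) + tail_term t (real n + 1/2) + recip_log'' t (real n) / 24"
  using theta_n_LIMSEQ[OF n] theta_n_le_bound[OF n] by (intro LIMSEQ_le_const2) auto

lemma theta_ge:
  assumes n: "admissible t (real n)"
  shows "integral {real n + 1..} (theta_dens t) + tail_term t (real n + 1) \<le> theta t n"
proof -
  have n1: "admissible t (real n + 1)" by (rule admissible_mono[OF n]) simp
  have "filterlim (\<lambda>m. real m + 1) at_top sequentially" by real_asymp
  then have "(\<lambda>m. integral {real n + 1..real m + 1} (theta_dens t)) \<longlonglongrightarrow> integral {real n + 1..} (theta_dens t)"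
    using theta_dens_integrable_on_Ici(2)[OF n1] by (rule filterlim_compose[rotated])
  moreover have "(\<lambda>m. tail_term t (real m + 1)) \<longlonglongrightarrow> 0"
    unfolding tail_term_def by real_asymp
  ultimately have "(\<lambda>m. integral {real n + 1..real m + 1} (theta_dens t) + tail_term t (real n + 1)
      - tail_term t (real m + 1)) \<longlonglongrightarrow> integral {real n + 1..} (theta_dens t) + tail_term t (real n + 1) - 0"
    by (intro tendsto_intros)
  then show ?thesis
    using LIMSEQ_le[OF _ theta_n_LIMSEQ[OF n]] theta_n_lower[OF n] by fastforce
qed

lemma theta_pos:
  assumes n: "admissible t (real n)"
  shows "0 < theta t n"
proof -
  have "admissible t (real n + 1)" by (rule admissible_mono[OF n]) simp
  then show ?thesis
    using theta_ge[OF n] theta_dens_integral_Ici_nonneg tail_term_pos by (smt (verit))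
qed

lemma theta_diff_theta_n:
  assumes N: "admissible t (real N)" and "N \<le> n"
  shows "theta t N - theta_n t N n = theta t n"
proof -
  have n: "admissible t (real n)" using admissible_of_nat_mono[OF N \<open>N \<le> n\<close>] .
  have "(\<lambda>m. theta_n t N m - theta_n t N n) \<longlonglongrightarrow> theta t N - theta_n t N n"
    by (intro tendsto_intros theta_n_LIMSEQ[OF N])
  moreover have "\<forall>\<^sub>F m in sequentially. theta_n t N m - theta_n t N n = theta_n t n m"
    using eventually_ge_at_top[of n]
  proof eventually_elim
    case (elim m)
    then show ?case using theta_n_split[OF N \<open>N \<le> n\<close> elim] by simp
  qed
  ultimately have "theta_n t n \<longlonglongrightarrow> theta t N - theta_n t N n"
    by (rule Lim_transform_eventually)
  then show ?thesis using theta_n_LIMSEQ[OF n] by (rule LIMSEQ_unique)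
qed

lemma theta_tail_term_bounds:
  assumes n: "admissible t (real n)"
  shows "tail_term t (real n + 1) / (1 + 2 / (t + ln (real n + 1))) + tail_term t (real n + 1) \<le> theta t n"
    "theta t n \<le> tail_term t (real n) + tail_term t (real n + 1/2) + recip_log'' t (real n) / 24"
proof -
  have n1: "admissible t (real n + 1)" by (rule admissible_mono[OF n]) simp
  then have "0 < 2 / (t + ln (real n + 1))" by (simp add: admissible_def)
  then have "0 < 1 + 2 / (t + ln (real n + 1))" by linarith
  then have "tail_term t (real n + 1) / (1 + 2 / (t + ln (real n + 1))) \<le> integral {real n + 1..} (theta_dens t)"
    using tail_term_le_theta_dens_integral_Ici[OF n1] by (simp add: divide_le_eq mult.commute)
  then show "tail_term t (real n + 1) / (1 + 2 / (t + ln (real n + 1))) + tail_term t (real n + 1) \<le> theta t n"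
    using theta_ge[OF n] by simp
  show "theta t n \<le> tail_term t (real n) + tail_term t (real n + 1/2) + recip_log'' t (real n) / 24"
    using theta_le[OF n] theta_dens_integral_Ici_le_tail_term[OF n] by simp
qed

lemma theta_diff_theta_n_asymp_equiv:
  assumes N: "admissible t (real N)"
  shows "(\<lambda>n. theta t N - theta_n t N n) \<sim>[sequentially] (\<lambda>n. 1 / (12 * real n * (ln (real n))^2))"
proof (rule asymp_equivI')
  define g where "g n = 1 / (12 * real n * (ln (real n))^2)" for n :: nat
  define lo where "lo n = tail_term t (real n + 1) / (1 + 2 / (t + ln (real n + 1))) + tail_term t (real n + 1)"
    for n :: nat
  define up where "up n = tail_term t (real n) + tail_term t (real n + 1/2) + recip_log'' t (real n) / 24"
    for n :: nat
  have lo: "(\<lambda>n. lo n / g n) \<longlonglongrightarrow> 1" unfolding lo_def g_def tail_term_def by real_asymp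
  have up: "(\<lambda>n. up n / g n) \<longlonglongrightarrow> 1" unfolding up_def g_def tail_term_def recip_log''_def by real_asymp
  have bounds: "\<forall>\<^sub>F n in sequentially. lo n / g n \<le> (theta t N - theta_n t N n) / g n
      \<and> (theta t N - theta_n t N n) / g n \<le> up n / g n"
    using eventually_ge_at_top[of "max N 2"]
  proof eventually_elim
    case (elim n)
    then have "0 < g n" by (simp add: g_def)
    moreover have "admissible t (real n)" using admissible_of_nat_mono[OF N] elim by simp
    moreover have "theta t N - theta_n t N n = theta t n" using elim by (intro theta_diff_theta_n[OF N]) simp
    ultimately show ?case
      using theta_tail_term_bounds[of t n] by (simp add: lo_def up_def divide_right_mono)
  qed
  show "(\<lambda>n. (theta t N - theta_n t N n) / (1 / (12 * real n * (ln (real n))^2))) \<longlonglongrightarrow> 1"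
    unfolding g_def[symmetric]
    by (rule tendsto_sandwich[OF eventually_mono[OF bounds] eventually_mono[OF bounds] lo up]) auto
qed

lemma theta_uniform_bound:
  "\<exists>C T. \<forall>M::nat. \<forall>s::real. M \<ge> 1 \<longrightarrow> s \<ge> T \<longrightarrow> \<bar>theta s M\<bar> \<le> C / (real M * s^2)"
proof (intro exI allI impI)
  fix M :: nat and s :: real
  assume M: "1 \<le> M" and s: "1 \<le> s"
  define x where "x = real M"
  have x: "1 \<le> x" using M by (simp add: x_def)
  have L: "s \<le> s + ln x" using x by simp
  have "0 \<le> ln x" using x by simp
  then have adm: "admissible s x" unfolding admissible_def using x s by linarith
  have "theta s M \<le> tail_term s x + tail_term s (x + 1/2) + recip_log'' s x / 24"
    using theta_tail_term_bounds(2)[of s M] adm by (simp add: x_def)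
  also have "\<dots> \<le> 2 * tail_term s x + recip_log'' s x / 24"
    using tail_term_antimono[OF adm, of "x + 1/2"] by simp
  also have "\<dots> = (2 * (1 / (x^1 * (s + ln x)^2)) + 1 / (x^2 * (s + ln x)^2)) / 24
      + (1 / (x^2 * (s + ln x)^3)) / 12"
    by (simp add: tail_term_def recip_log''_def field_simps)
  also have "\<dots> \<le> (2 * (1 / (x * s^2)) + 1 / (x * s^2)) / 24 + (1 / (x * s^2)) / 12"
    using x s L by (intro add_mono divide_right_mono mult_left_mono inverse_powers_le_inverse_mult_square) auto
  also have "\<dots> = 5 / 24 * (1 / (real M * s^2))" by (simp add: x_def)
  also have "\<dots> \<le> 1 / (real M * s^2)" by (rule mult_left_le_one_le) auto
  finally show "\<bar>theta s M\<bar> \<le> 1 / (real M * s^2)"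
    using theta_pos[of s M] adm by (simp add: x_def)
qed

theorem theorem3p3:
  fixes N :: nat and t :: real
  assumes hN: "N \<ge> 1" and ht: "t > - ln (real N)"
  shows
    \<comment> \<open>(1)\<close>
    "(\<forall>n. n > N \<longrightarrow> theta_n t N n > 0)
     \<and> (\<forall>m n. N < m \<longrightarrow> m < n \<longrightarrow> theta_n t N m < theta_n t N n)
     \<and> (\<exists>B. \<forall>n. n > N \<longrightarrow> theta_n t N n \<le> B)
     \<and> (\<lambda>n. theta_n t N n) \<longlonglongrightarrow> theta t N
     \<and> theta t N > 0
    \<comment> \<open>(2)\<close>
     \<and> (\<forall>n::nat. n \<ge> N \<longrightarrow>
          theta t N - theta_n t N n = theta t n
          \<and> (\<lambda>x. 1 / (24 * x^2 * (t + ln x)^2)) integrable_on {real n..}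
          \<and> (\<lambda>x. 1 / (24 * x^2 * (t + ln x)^2)) integrable_on {real n + 1..}
          \<and> integral {real n + 1..} (\<lambda>x. 1 / (24 * x^2 * (t + ln x)^2))
              + 1 / (24 * (real n + 1) * (t + ln (real n + 1))^2) \<le> theta t n
          \<and> theta t n \<le> integral {real n..} (\<lambda>x. 1 / (24 * x^2 * (t + ln x)^2))
              + 1 / (24 * (real n + 1/2) * (t + ln (real n + 1/2))^2)
              + 1 / (24 * (real n)^2 * (t + ln (real n))^2)
              + 1 / (12 * (real n)^2 * (t + ln (real n))^3))
    \<comment> \<open>(3)\<close>
     \<and> (\<lambda>n. theta t N - theta_n t N n) \<sim>[sequentially]
          (\<lambda>n. 1 / (12 * real n * (ln (real n))^2))
     \<and> (\<exists>C T. \<forall>M::nat. \<forall>s::real. M \<ge> 1 \<longrightarrow> s \<ge> T \<longrightarrow>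
          \<bar>theta s M\<bar> \<le> C / (real M * s^2))"
proof -
  have N: "admissible t (real N)" using hN ht by (simp add: admissible_def)
  have part2: "theta t N - theta_n t N n = theta t n
      \<and> theta_dens t integrable_on {real n..} \<and> theta_dens t integrable_on {real n + 1..}
      \<and> integral {real n + 1..} (theta_dens t) + tail_term t (real n + 1) \<le> theta t n
      \<and> theta t n \<le> integral {real n..} (theta_dens t) + tail_term t (real n + 1/2) + recip_log'' t (real n) / 24"
    if "N \<le> n" for n
  proof -
    have n: "admissible t (real n)" using admissible_of_nat_mono[OF N that] .
    moreover have "admissible t (real n + 1)" by (rule admissible_mono[OF n]) simp
    ultimately show ?thesis
      using theta_diff_theta_n[OF N that] theta_dens_integrable_on_Ici(1) theta_ge theta_le by blast
  qed
  have bounded: "\<exists>B. \<forall>n. theta_n t N n \<le> B" using theta_n_le_bound[OF N] by blast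
  show ?thesis
    using theta_n_pos[OF N] theta_n_strict_mono[OF N] bounded theta_n_LIMSEQ[OF N]
      theta_pos[OF N] part2 theta_diff_theta_n_asymp_equiv[OF N] theta_uniform_bound
    unfolding theta_dens_def[abs_def] tail_term_def recip_log''_div_24
    by (auto simp: add.assoc intro: less_imp_le)
qed

end
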